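(* Under the hypotheses in the context, the cohomology spaces of the differential algebra $(\mathcal A(\mathbf{CPE}),\{D_t,D_1,\dots,D_m\})$ are $$H^q_{\mathrm E}(\mathbf{CPE})\cong\begin{cases}0,& q<0,\ 1\le q\le m-2,\ q>m+1;\\ \mathbb R,& q=0;\\ \ker D_t^{m-1},& q=m-1;\\ H^m_{\mathrm H}(\mathbf{CPE})/\operatorname{im}D_t^m,& q=m+1,\end{cases}$$ and in degree $q=m$, $H^m_{\mathrm E}(\mathbf{CPE})/\operatorname{im}\big(H^{m-1}_{\mathrm H}(\mathbf{CPE})\big)\cong\ker D_t^m$, where the map $H^{m-1}_{\mathrm H}(\mathbf{CPE})\to H^m_{\mathrm E}(\mathbf{CPE})$ is induced by $\omega\mapsto(-1)^{m-1}dt\wedge\omega$.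
   Context: Fix an integer $m\ge 2$, $M=\{1,\dots,m\}$, $N=\{2,\dots,m\}$; indices $\lambda,\mu$ in $M$, $\alpha,\beta$ in $N$; repeated upper/lower indices are summed. $\mathbb I=\mathbb Z_+^m$ is the set of multi-indices $\mathrm i$; $\mathrm i+(\mu)$ increases the $\mu$-th entry by $1$, $(\mu)=0+(\mu)$, $2(\mu)=(\mu)+(\mu)$; $\mathbb I_0=\{\mathrm i:i^1=0\}$, $\mathbb I_1=\{\mathrm i:i^1\in\{0,1\}\}$. $\mathcal A(\mathbf{CPE})$ is the algebra of smooth real functions of finitely many of the variables $t\in\mathbb R$, $x^\mu$, $u^1_{\mathrm i}$ ($\mathrm i\in\mathbb I_0$), $u^\alpha_{\mathrm i}$ ($\mathrm i\in\mathbb I$), $p_{\mathrm i}$ ($\mathrm i\in\mathbb I_1$). It carries commuting derivations $D_\mu=\partial_{x^\mu}+u^1_{\mathrm i_0+(\mu)}\partial_{u^1_{\mathrm i_0}}+u^\alpha_{\mathrm i+(\mu)}\partial_{u^\alpha_{\mathrm i}}+p_{\mathrm i_1+(\mu)}\partial_{p_{\mathrm i_1}}$ (sums over $\mathrm i_0\in\mathbb I_0$, $\mathrm i\in\mathbb I$, $\mathrm i_1\in\mathbb I_1$), where the variables not in the list are expressed recursively by $u^1_{\mathrm k}=-u^\beta_{\mathrm k-(1)+(\beta)}$ ($k^1\ge1$) and $p_{\mathrm k}=-D_{\mathrm k-2(1)}\Phi$ ($k^1\ge2$), $\Phi=\sum_\alpha p_{2(\alpha)}+u^\lambda_{(\mu)}u^\mu_{(\lambda)}$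 with $u^1_{(1)}$ replaced by $-u^\alpha_{(\alpha)}$ (this is the quotient of the algebra of finite-order functions of $t,x^\mu,u^\mu_{\mathrm i},p_{\mathrm i}$ by the differential ideal generated by $u^\mu_{(\mu)}$ and $\Delta p+u^\lambda_{(\mu)}u^\mu_{(\lambda)}$, $\Delta=\sum_\mu D_\mu^2$). $D_{\mathrm i}=D_1^{i^1}\cdots D_m^{i^m}$. Let $\mathrm E=(E^1,\dots,E^m,E)\in\mathcal A(\mathbf{CPE})^{m+1}$ satisfy $D_\mu E^\mu=0$ and $\Delta E+2u^\lambda_{(\mu)}D_\lambda E^\mu=0$ (with $u^1_{(1)}=-u^\alpha_{(\alpha)}$), let $\mathrm{ev}_{\mathrm E}=D_{\mathrm i_0}E^1\,\partial_{u^1_{\mathrm i_0}}+D_{\mathrm i}E^\alpha\,\partial_{u^\alpha_{\mathrm i}}+D_{\mathrm i_1}E\,\partial_{p_{\mathrm i_1}}$, assumed to commute with all $D_\mu$, and let $D_t=\partial_t+\mathrm{ev}_{\mathrm E}$, so $[D_t,D_\mu]=0$. Horizontal forms $\Omega^q_{\mathrm H}$: $q$-forms in $dx^\mu$ with skew-symmetric coefficients in $\mathcal A(\mathbf{CPE})$ ($0\le q\le m$, zero otherwise), $d_{\mathrm H}=dx^\mu\wedge D_\mu$ (acting on coefficients), $H^q_{\mathrm H}(\mathbf{CPE})=\ker d_{\mathrm H}/\operatorname{im}d_{\mathrm H}$. Evolution forms: $\Omega^q_{\mathrm E}=dt\wedge\Omega^{q-1}_{\mathrm H}\oplus\Omega^q_{\mathrm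 H}$ with $d_{\mathrm E}(dt\wedge\omega^{q-1}+\omega^q)=dt\wedge(D_t\omega^q-d_{\mathrm H}\omega^{q-1})+d_{\mathrm H}\omega^q$ ($D_t$ acting coefficientwise), and $H^q_{\mathrm E}(\mathbf{CPE})=\ker d_{\mathrm E}/\operatorname{im}d_{\mathrm E}$ in degree $q$. $D_t$ acting coefficientwise commutes with $d_{\mathrm H}$ and induces $D^q_t:H^q_{\mathrm H}(\mathbf{CPE})\to H^q_{\mathrm H}(\mathbf{CPE})$. Standing fact used in the statement: $H^q_{\mathrm H}(\mathbf{CPE})=0$ for $1\le q\le m-2$, and $H^0_{\mathrm H}(\mathbf{CPE})$ consists of the smooth functions of $t$ alone. *)

theory Defs
  imports "HOL-Analysis.Analysis" "HOL-Library.Function_Algebras"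
begin

type_synonym mindex = "nat \<Rightarrow> nat"

definition MI :: "nat \<Rightarrow> mindex set" where
  "MI m = {i. \<forall>j. j \<notin> {1..m} \<longrightarrow> i j = 0}"

definition inc :: "mindex \<Rightarrow> nat \<Rightarrow> mindex" where
  "inc i \<mu> = i(\<mu> := Suc (i \<mu>))"

definition unit_mi :: "nat \<Rightarrow> mindex" where
  "unit_mi \<mu> = inc (\<lambda>_. 0) \<mu>"

datatype var = T | X nat | U nat mindex | P mindex

definition vars :: "nat \<Rightarrow> var set" where
  "vars m = {T} \<union> {X \<mu> | \<mu>. \<mu> \<in> {1..m}}
     \<union> {U 1 i | i. i \<in> MI m \<and> i 1 = 0}
     \<union> {U \<alpha> i | \<alpha> i. \<alpha> \<in> {2..m} \<and> i \<in> MI m}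
     \<union> {P i | i. i \<in> MI m \<and> i 1 \<le> 1}"

type_synonym pt = "var \<Rightarrow> real"
type_synonym fn = "pt \<Rightarrow> real"

definition depends_only :: "fn \<Rightarrow> var set \<Rightarrow> bool" where
  "depends_only f S \<longleftrightarrow> (\<forall>a b. (\<forall>v\<in>S. a v = b v) \<longrightarrow> f a = f b)"

definition dep :: "fn \<Rightarrow> var set" where
  "dep f = {v. \<exists>a s. f (a(v := s)) \<noteq> f a}"

definition pd :: "var \<Rightarrow> fn \<Rightarrow> fn" where
  "pd v f = (\<lambda>a. deriv (\<lambda>s. f (a(v := s))) (a v))"

definition iter_pd :: "var list \<Rightarrow> fn \<Rightarrow> fn" where
  "iter_pd vs f = foldr pd vs f"

definition smooth :: "fn \<Rightarrow> bool" where
  "smooth f \<longleftrightarrow> (\<forall>vs. continuous_on UNIV (iter_pd vs f)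
      \<and> (\<forall>v a. (\<lambda>s. iter_pd vs f (a(v := s))) differentiable (at (a v))))"

definition Alg :: "nat \<Rightarrow> fn set" where
  "Alg m = {f. (\<exists>S. finite S \<and> S \<subseteq> vars m \<and> depends_only f S) \<and> smooth f}"

definition Dgen :: "(var \<Rightarrow> fn) \<Rightarrow> fn \<Rightarrow> fn" where
  "Dgen c f = (\<lambda>a. \<Sum>v\<in>dep f. c v a * pd v f a)"

definition coefA :: "nat \<Rightarrow> var \<Rightarrow> fn" where
  "coefA \<alpha> v = (case v of
      T \<Rightarrow> (\<lambda>_. 0)
    | X \<nu> \<Rightarrow> (\<lambda>_. if \<nu> = \<alpha> then 1 else 0)
    | U \<beta> i \<Rightarrow> (\<lambda>a. a (U \<beta> (inc i \<alpha>)))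
    | P i \<Rightarrow> (\<lambda>a. a (P (inc i \<alpha>))))"

definition Dalpha :: "nat \<Rightarrow> fn \<Rightarrow> fn" where
  "Dalpha \<alpha> = Dgen (coefA \<alpha>)"

definition DN :: "nat \<Rightarrow> mindex \<Rightarrow> fn \<Rightarrow> fn" where
  "DN m j f = foldr (\<lambda>\<alpha> g. (Dalpha \<alpha> ^^ j \<alpha>) g) [2..<m+1] f"

definition uval :: "nat \<Rightarrow> nat \<Rightarrow> nat \<Rightarrow> fn" where
  "uval m l \<mu> = (\<lambda>a. if l = 1 \<and> \<mu> = 1
       then - (\<Sum>\<alpha>\<in>{2..m}. a (U \<alpha> (unit_mi \<alpha>)))
       else a (U l (unit_mi \<mu>)))"

definition Phi :: "nat \<Rightarrow> fn" where
  "Phi m = (\<lambda>a. (\<Sum>\<alpha>\<in>{2..m}. a (P (inc (unit_mi \<alpha>) \<alpha>)))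
       + (\<Sum>l\<in>{1..m}. \<Sum>\<mu>\<in>{1..m}. uval m l \<mu> a * uval m \<mu> l a))"

text \<open>Coefficients of D_1, using u^1_k = -u^beta_{k-(1)+(beta)} and p_k = -D_{k-2(1)} Phi.\<close>
definition coef1 :: "nat \<Rightarrow> var \<Rightarrow> fn" where
  "coef1 m v = (case v of
      T \<Rightarrow> (\<lambda>_. 0)
    | X \<nu> \<Rightarrow> (\<lambda>_. if \<nu> = 1 then 1 else 0)
    | U \<beta> i \<Rightarrow> (if \<beta> = 1 then (\<lambda>a. - (\<Sum>\<gamma>\<in>{2..m}. a (U \<gamma> (inc i \<gamma>))))
                else (\<lambda>a. a (U \<beta> (inc i 1))))
    | P i \<Rightarrow> (if i 1 = 0 then (\<lambda>a. a (P (inc i 1)))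
              else (\<lambda>a. - DN m (i(1 := 0)) (Phi m) a)))"

definition D :: "nat \<Rightarrow> nat \<Rightarrow> fn \<Rightarrow> fn" where
  "D m \<mu> = (if \<mu> = 1 then Dgen (coef1 m) else Dgen (coefA \<mu>))"

definition Dmulti :: "nat \<Rightarrow> mindex \<Rightarrow> fn \<Rightarrow> fn" where
  "Dmulti m i f = foldr (\<lambda>\<mu> g. (D m \<mu> ^^ i \<mu>) g) [1..<m+1] f"

definition Lap :: "nat \<Rightarrow> fn \<Rightarrow> fn" where
  "Lap m f = (\<lambda>a. \<Sum>\<mu>\<in>{1..m}. D m \<mu> (D m \<mu> f) a)"

text \<open>E : components E^1..E^m (as E 1, ..., E m) and Ep = E (the p-component).\<close>
definition evcoef :: "nat \<Rightarrow> (nat \<Rightarrow> fn) \<Rightarrow> fn \<Rightarrow> var \<Rightarrow> fn" where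
  "evcoef m E Ep v = (case v of
      T \<Rightarrow> (\<lambda>_. 0)
    | X \<nu> \<Rightarrow> (\<lambda>_. 0)
    | U \<beta> i \<Rightarrow> Dmulti m i (E \<beta>)
    | P i \<Rightarrow> Dmulti m i Ep)"

definition ev :: "nat \<Rightarrow> (nat \<Rightarrow> fn) \<Rightarrow> fn \<Rightarrow> fn \<Rightarrow> fn" where
  "ev m E Ep = Dgen (evcoef m E Ep)"

definition Dt :: "nat \<Rightarrow> (nat \<Rightarrow> fn) \<Rightarrow> fn \<Rightarrow> fn \<Rightarrow> fn" where
  "Dt m E Ep f = (\<lambda>a. pd T f a + ev m E Ep f a)"

text \<open>A form assigns to each set J = {j1<...<jq} of indices the coefficient of dx^{j1}/\...dx^{jq}.\<close>
type_synonym form = "nat set \<Rightarrow> fn"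

definition Hform :: "nat \<Rightarrow> int \<Rightarrow> form set" where
  "Hform m q = {\<omega>. (\<forall>J. \<omega> J \<in> Alg m)
      \<and> (\<forall>J. \<not> (J \<subseteq> {1..m} \<and> int (card J) = q) \<longrightarrow> \<omega> J = (\<lambda>_. 0))}"

definition dH :: "nat \<Rightarrow> form \<Rightarrow> form" where
  "dH m \<omega> = (\<lambda>J a. if J \<subseteq> {1..m}
      then (\<Sum>\<mu>\<in>J. (-1) ^ card {\<nu>\<in>J. \<nu> < \<mu>} * D m \<mu> (\<omega> (J - {\<mu>})) a)
      else 0)"

definition DtF :: "nat \<Rightarrow> (nat \<Rightarrow> fn) \<Rightarrow> fn \<Rightarrow> form \<Rightarrow> form" where
  "DtF m E Ep \<omega> = (\<lambda>J. Dt m E Ep (\<omega> J))"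

definition zform :: form where "zform = (\<lambda>_ _. 0)"

definition ZH :: "nat \<Rightarrow> int \<Rightarrow> form set" where
  "ZH m q = {\<omega> \<in> Hform m q. dH m \<omega> = zform}"

definition BH :: "nat \<Rightarrow> int \<Rightarrow> form set" where
  "BH m q = dH m ` Hform m (q - 1)"

section \<open>Evolution forms: (theta, omega) stands for dt /\ theta + omega\<close>

definition Eform :: "nat \<Rightarrow> int \<Rightarrow> (form \<times> form) set" where
  "Eform m q = {(\<theta>, \<omega>). \<theta> \<in> Hform m (q - 1) \<and> \<omega> \<in> Hform m q}"

definition dE :: "nat \<Rightarrow> (nat \<Rightarrow> fn) \<Rightarrow> fn \<Rightarrow> form \<times> form \<Rightarrow> form \<times> form" where
  "dE m E Ep x = (case x of (\<theta>, \<omega>) \<Rightarrow>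
      ((\<lambda>J a. DtF m E Ep \<omega> J a - dH m \<theta> J a), dH m \<omega>))"

definition ZE :: "nat \<Rightarrow> (nat \<Rightarrow> fn) \<Rightarrow> fn \<Rightarrow> int \<Rightarrow> (form \<times> form) set" where
  "ZE m E Ep q = {x \<in> Eform m q. dE m E Ep x = (zform, zform)}"

definition BE :: "nat \<Rightarrow> (nat \<Rightarrow> fn) \<Rightarrow> fn \<Rightarrow> int \<Rightarrow> (form \<times> form) set" where
  "BE m E Ep q = dE m E Ep ` Eform m (q - 1)"

definition sc_form :: "real \<Rightarrow> form \<Rightarrow> form" where
  "sc_form c \<omega> = (\<lambda>J a. c * \<omega> J a)"

definition sc_pair :: "real \<Rightarrow> form \<times> form \<Rightarrow> form \<times> form" where
  "sc_pair c x = (sc_form c (fst x), sc_form c (snd x))"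

text \<open>Z/B is isomorphic to Z'/B' (B, B' subspaces of Z, Z'): there is a linear
  map Z -> Z' inducing a bijection Z/B -> Z'/B'.\<close>
definition sq_iso :: "'a::ab_group_add set \<Rightarrow> 'a set \<Rightarrow> (real \<Rightarrow> 'a \<Rightarrow> 'a)
    \<Rightarrow> 'b::ab_group_add set \<Rightarrow> 'b set \<Rightarrow> (real \<Rightarrow> 'b \<Rightarrow> 'b) \<Rightarrow> bool" where
  "sq_iso Z B sa Z' B' sb \<longleftrightarrow> (\<exists>\<phi>.
      (\<forall>x\<in>Z. \<forall>y\<in>Z. \<phi> (x + y) = \<phi> x + \<phi> y)
    \<and> (\<forall>c. \<forall>x\<in>Z. \<phi> (sa c x) = sb c (\<phi> x))
    \<and> \<phi> ` Z \<subseteq> Z'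
    \<and> (\<forall>z'\<in>Z'. \<exists>z\<in>Z. z' - \<phi> z \<in> B')
    \<and> (\<forall>z\<in>Z. \<phi> z \<in> B' \<longleftrightarrow> z \<in> B))"

text \<open>ker D_t^q as a subquotient of H^q_H: classes of closed q-forms omega with D_t omega exact.\<close>
definition KerDt :: "nat \<Rightarrow> (nat \<Rightarrow> fn) \<Rightarrow> fn \<Rightarrow> int \<Rightarrow> form set" where
  "KerDt m E Ep q = {\<omega> \<in> ZH m q. DtF m E Ep \<omega> \<in> BH m q}"

end

theory Submission
  imports Defs
begin

text \<open>Write an evolution form as \<open>dt \<and> \<theta> + \<omega>\<close>. It is \<open>d\<^sub>E\<close>-closed iff \<open>d\<^sub>H \<omega> = 0\<close> and
  \<open>D\<^sub>t \<omega> = d\<^sub>H \<theta>\<close>, so \<open>\<omega> \<mapsto> [\<omega>]\<close> lands in \<open>ker D\<^sub>t\<close>. Conversely, if \<open>\<omega> = d\<^sub>H \<alpha>\<close>, then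
  \<open>\<eta> = \<theta> - D\<^sub>t \<alpha>\<close> is a horizontally closed form of degree \<open>q - 1\<close>, because \<open>D\<^sub>t\<close> commutes with
  \<open>d\<^sub>H\<close>. For \<open>2 \<le> q \<le> m - 1\<close> it is exact by the vanishing of \<open>H\<^sub>H\<close>; for \<open>q = 1\<close> it is a
  function of \<open>t\<close> alone and hence equal to \<open>\<partial>\<^sub>t\<close> of one. In both cases
  \<open>\<eta> = D\<^sub>t \<gamma> + d\<^sub>H \<beta>\<close> with \<open>d\<^sub>H \<gamma> = 0\<close>, and then \<open>dt \<and> \<theta> + \<omega> = d\<^sub>E(dt \<and> (-\<beta>) + \<alpha> + \<gamma>)\<close>.
  This identifies \<open>H\<^sup>q\<^sub>E\<close> with \<open>ker D\<^sup>q\<^sub>t\<close> for \<open>q \<le> m - 1\<close>, and modulo the forms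
  \<open>\<plusminus>dt \<and> \<eta>\<close> with \<open>\<eta>\<close> closed for \<open>q = m\<close>. In degree \<open>m + 1\<close> only \<open>\<theta>\<close> survives, and the
  exact ones are \<open>d\<^sub>H \<beta> + D\<^sub>t \<alpha>\<close>. In degree 0 the closed forms are the constants.

  That \<open>D\<^sub>t\<close> commutes with \<open>D\<^sub>\<mu>\<close> is assumed for the evolutionary part; for \<open>\<partial>\<^sub>t\<close> it holds
  because the coefficients of \<open>D\<^sub>\<mu>\<close> do not depend on \<open>t\<close>, by Schwarz's theorem.\<close>

section \<open>Smooth functions of infinitely many variables\<close>

definition partially_differentiable :: "fn \<Rightarrow> bool" where
  "partially_differentiable f \<longleftrightarrow> (\<forall>v a. (\<lambda>s. f (a(v := s))) differentiable (at (a v)))"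

lemma iter_pd_snoc: "iter_pd (vs @ [v]) f = iter_pd vs (pd v f)"
  by (simp add: iter_pd_def)

lemma smooth_iff:
  "smooth f \<longleftrightarrow> continuous_on UNIV f \<and> partially_differentiable f \<and> (\<forall>v. smooth (pd v f))"
proof
  assume s: "smooth f"
  show "continuous_on UNIV f \<and> partially_differentiable f \<and> (\<forall>v. smooth (pd v f))"
  proof (intro conjI allI)
    show "continuous_on UNIV f" "partially_differentiable f"
      using s[unfolded smooth_def, rule_format, of "[]"]
      by (simp_all add: iter_pd_def partially_differentiable_def)
    show "smooth (pd v f)" for v
      using s unfolding smooth_def by (metis iter_pd_snoc)
  qed
next
  assume h: "continuous_on UNIV f \<and> partially_differentiable f \<and> (\<forall>v. smooth (pd v f))"
  show "smooth f" unfolding smooth_def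
  proof
    fix vs :: "var list"
    show "continuous_on UNIV (iter_pd vs f)
        \<and> (\<forall>v a. (\<lambda>s. iter_pd vs f (a(v := s))) differentiable at (a v))"
    proof (cases vs rule: rev_cases)
      case Nil
      then show ?thesis using h by (simp add: iter_pd_def partially_differentiable_def)
    next
      case (snoc ys y)
      then show ?thesis using h unfolding smooth_def by (simp add: iter_pd_snoc)
    qed
  qed
qed

lemma smooth_coinduct:
  assumes closed: "\<And>f. f \<in> F \<Longrightarrow>
      continuous_on UNIV f \<and> partially_differentiable f \<and> (\<forall>v. pd v f \<in> F)"
    and "f \<in> F"
  shows "smooth f"
proof -
  have "iter_pd vs f \<in> F" for vs
    by (induction vs) (use \<open>f \<in> F\<close> closed in \<open>auto simp: iter_pd_def\<close>)
  then show ?thesis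
    unfolding smooth_def using closed unfolding partially_differentiable_def by blast
qed

lemma smooth_continuous_on: "smooth f \<Longrightarrow> continuous_on UNIV f"
  using smooth_iff by blast

lemma smooth_pd: "smooth f \<Longrightarrow> smooth (pd v f)"
  using smooth_iff by blast

lemma smooth_has_pd:
  assumes "smooth f"
  shows "((\<lambda>s. f (a(v := s))) has_real_derivative pd v f a) (at (a v))"
proof -
  have "(\<lambda>s. f (a(v := s))) differentiable (at (a v))"
    using assms smooth_iff partially_differentiable_def by blast
  then show ?thesis
    unfolding pd_def using DERIV_deriv_iff_real_differentiable by blast
qed

lemma smooth_has_pd_at:
  assumes "smooth f"
  shows "((\<lambda>s. f (a(v := s))) has_real_derivative pd v f (a(v := s0))) (at s0)"
  using smooth_has_pd[OF assms, of "a(v := s0)" v] by simp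

lemma pd_eqI:
  assumes "\<And>a. ((\<lambda>s. f (a(v := s))) has_real_derivative g a) (at (a v))"
  shows "pd v f = g"
  unfolding pd_def using assms DERIV_imp_deriv by (intro ext) blast

lemma partially_differentiableI:
  assumes "\<And>v a. ((\<lambda>s. f (a(v := s))) has_real_derivative g v a) (at (a v))"
  shows "partially_differentiable f"
  unfolding partially_differentiable_def using assms real_differentiable_def by blast

lemma pd_const: "pd v (\<lambda>_. c) = (\<lambda>_. 0)"
  by (rule pd_eqI) simp

lemma pd_coord: "pd v (\<lambda>a. a w) = (\<lambda>_. if v = w then 1 else 0)"
  by (rule pd_eqI) (auto intro: derivative_eq_intros)

lemma pd_add: "smooth f \<Longrightarrow> smooth g \<Longrightarrow> pd v (\<lambda>a. f a + g a) = (\<lambda>a. pd v f a + pd v g a)"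
  by (rule pd_eqI) (intro DERIV_add smooth_has_pd)

lemma pd_cmult: "smooth f \<Longrightarrow> pd v (\<lambda>a. k * f a) = (\<lambda>a. k * pd v f a)"
  by (rule pd_eqI) (intro DERIV_cmult smooth_has_pd)

lemma pd_sum:
  assumes "finite I" "\<And>i. i \<in> I \<Longrightarrow> smooth (f i)"
  shows "pd v (\<lambda>a. \<Sum>i\<in>I. k i * f i a) = (\<lambda>a. \<Sum>i\<in>I. k i * pd v (f i) a)"
  by (rule pd_eqI) (use assms in \<open>intro DERIV_sum DERIV_cmult smooth_has_pd\<close>)

text \<open>Closure of smooth functions under \<open>+\<close> and \<open>*\<close> is proved coinductively for the class of
  sums of products of two smooth functions, which the product rule maps into itself.\<close>

definition sum_prods :: "(fn \<times> fn) list \<Rightarrow> fn" where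
  "sum_prods L = (\<lambda>a. \<Sum>p\<leftarrow>L. fst p a * snd p a)"

definition pd_prods :: "var \<Rightarrow> (fn \<times> fn) list \<Rightarrow> (fn \<times> fn) list" where
  "pd_prods v L = concat (map (\<lambda>p. [(pd v (fst p), snd p), (fst p, pd v (snd p))]) L)"

lemma continuous_on_sum_prods:
  assumes "\<forall>p\<in>set L. smooth (fst p) \<and> smooth (snd p)"
  shows "continuous_on UNIV (sum_prods L)"
  using assms
proof (induction L)
  case (Cons p L)
  then have "continuous_on UNIV (\<lambda>a. fst p a * snd p a + sum_prods L a)"
    by (intro continuous_on_add continuous_on_mult) (auto intro: smooth_continuous_on)
  then show ?case by (simp add: sum_prods_def)
qed (simp add: sum_prods_def)

lemma sum_prods_has_pd:
  assumes "\<forall>p\<in>set L. smooth (fst p) \<and> smooth (snd p)"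
  shows "((\<lambda>s. sum_prods L (a(v := s))) has_real_derivative sum_prods (pd_prods v L) a) (at (a v))"
  using assms
proof (induction L)
  case (Cons p L)
  have "((\<lambda>s. fst p (a(v := s)) * snd p (a(v := s)) + sum_prods L (a(v := s))) has_real_derivative
      (pd v (fst p) a * snd p (a(v := a v)) + pd v (snd p) a * fst p (a(v := a v)))
        + sum_prods (pd_prods v L) a) (at (a v))"
    using Cons by (intro DERIV_add DERIV_mult smooth_has_pd Cons.IH) auto
  moreover have "(\<lambda>s. sum_prods (p # L) (a(v := s)))
      = (\<lambda>s. fst p (a(v := s)) * snd p (a(v := s)) + sum_prods L (a(v := s)))"
    by (simp add: sum_prods_def)
  moreover have "sum_prods (pd_prods v (p # L)) a
      = (pd v (fst p) a * snd p (a(v := a v)) + pd v (snd p) a * fst p (a(v := a v)))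
        + sum_prods (pd_prods v L) a"
    by (simp add: sum_prods_def pd_prods_def algebra_simps)
  ultimately show ?case by (simp only:)
qed (simp add: sum_prods_def pd_prods_def)

lemma smooth_sum_prods:
  assumes "\<forall>p\<in>set L. smooth (fst p) \<and> smooth (snd p)"
  shows "smooth (sum_prods L)"
proof (rule smooth_coinduct[where F="{sum_prods L | L. \<forall>p\<in>set L. smooth (fst p) \<and> smooth (snd p)}"])
  fix f assume "f \<in> {sum_prods L | L. \<forall>p\<in>set L. smooth (fst p) \<and> smooth (snd p)}"
  then obtain L where f: "f = sum_prods L" and L: "\<forall>p\<in>set L. smooth (fst p) \<and> smooth (snd p)"
    by blast
  have "pd v f = sum_prods (pd_prods v L)" for v
    unfolding f by (rule pd_eqI, rule sum_prods_has_pd[OF L])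
  moreover have "\<forall>p\<in>set (pd_prods v L). smooth (fst p) \<and> smooth (snd p)" for v
    using L by (auto simp: pd_prods_def intro: smooth_pd)
  ultimately show "continuous_on UNIV f \<and> partially_differentiable f
      \<and> (\<forall>v. pd v f \<in> {sum_prods L | L. \<forall>p\<in>set L. smooth (fst p) \<and> smooth (snd p)})"
    using continuous_on_sum_prods[OF L] sum_prods_has_pd[OF L] f
    by (auto intro!: partially_differentiableI)
qed (use assms in blast)

lemma smooth_const: "smooth (\<lambda>_. c)"
proof (rule smooth_coinduct[where F="range (\<lambda>c. \<lambda>_. c)"])
  fix f :: fn assume "f \<in> range (\<lambda>c. \<lambda>_. c)"
  moreover have "partially_differentiable (\<lambda>_. d)" for d
    by (rule partially_differentiableI[where g="\<lambda>_ _. 0"]) (rule DERIV_const)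
  ultimately show "continuous_on UNIV f \<and> partially_differentiable f \<and> (\<forall>v. pd v f \<in> range (\<lambda>c. \<lambda>_. c))"
    by (auto simp: pd_const)
qed (rule rangeI)

lemma smooth_mult: "smooth f \<Longrightarrow> smooth g \<Longrightarrow> smooth (\<lambda>a. f a * g a)"
  using smooth_sum_prods[of "[(f, g)]"] by (simp add: sum_prods_def)

lemma smooth_add: "smooth f \<Longrightarrow> smooth g \<Longrightarrow> smooth (\<lambda>a. f a + g a)"
  using smooth_sum_prods[of "[(f, \<lambda>_. 1), (g, \<lambda>_. 1)]"] smooth_const by (simp add: sum_prods_def)

lemma smooth_coord: "smooth (\<lambda>a. a w)"
proof (subst smooth_iff, intro conjI allI)
  show "partially_differentiable (\<lambda>a. a w)"
    by (rule partially_differentiableI[where g="\<lambda>v _. if v = w then 1 else 0"])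
       (auto intro: derivative_eq_intros)
  show "continuous_on UNIV (\<lambda>a. a w)"
    by (rule continuous_on_product_coordinates)
qed (simp add: pd_coord smooth_const)

subsection \<open>Schwarz's theorem\<close>

lemma continuous_on_upd:
  assumes "continuous_on UNIV F"
  shows "continuous_on S (\<lambda>r::real. F (a(v := r)))"
proof -
  have "continuous_on UNIV (\<lambda>r::real. a(v := r))"
  proof (rule continuous_on_coordinatewise_then_product)
    show "continuous_on UNIV (\<lambda>r::real. (a(v := r)) w)" for w
      by (cases "w = v") (auto intro: continuous_intros)
  qed
  then have "continuous_on UNIV (\<lambda>r::real. F (a(v := r)))"
    using continuous_on_compose2[OF assms] by auto
  then show ?thesis by (rule continuous_on_subset) simp
qed

lemma continuous_on_upd2:
  assumes "continuous_on UNIV F"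
  shows "continuous_on UNIV (\<lambda>z::real \<times> real. F (a(u := fst z, v := snd z)))"
proof -
  have "continuous_on UNIV (\<lambda>z::real \<times> real. a(u := fst z, v := snd z))"
  proof (rule continuous_on_coordinatewise_then_product)
    show "continuous_on UNIV (\<lambda>z::real \<times> real. (a(u := fst z, v := snd z)) w)" for w
      by (cases "w = v"; cases "w = u") (auto intro: continuous_intros)
  qed
  then show ?thesis
    using continuous_on_compose2[OF assms] by auto
qed

text \<open>Differentiating \<open>f = f(\<dots>, r\<^sub>0) + \<integral>\<^sub>r\<^sub>0\<^sup>r \<partial>\<^sub>v f\<close> in \<open>u\<close> under the integral sign.\<close>

lemma pd_eq_integral_pd_pd:
  assumes f: "smooth f" and uv: "u \<noteq> v" and r: "r0 \<le> r"
  shows "pd u f (a(v := r)) = pd u f (a(v := r0)) + integral {r0..r} (\<lambda>\<rho>. pd u (pd v f) (a(v := \<rho>)))"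
proof -
  define pt2 where "pt2 s r = a(u := s, v := r)" for s r
  have Pu: "(pt2 s r)(u := s') = pt2 s' r" and Pv: "(pt2 s r)(v := r') = pt2 s r'" for s r s' r'
    using uv by (simp_all add: pt2_def fun_upd_twist)
  have dv: "((\<lambda>r'. f (pt2 s r')) has_real_derivative pd v f (pt2 s r)) (at r)" for s r
    using smooth_has_pd_at[OF f, of "pt2 s r" v r] by (simp add: Pv)
  have du: "((\<lambda>s'. f (pt2 s' r)) has_real_derivative pd u f (pt2 s r)) (at s)" for s r
    using smooth_has_pd_at[OF f, of "pt2 s r" u s] by (simp add: Pu)
  have duv: "((\<lambda>s'. pd v f (pt2 s' r)) has_real_derivative pd u (pd v f) (pt2 s r)) (at s)" for s r
    using smooth_has_pd_at[OF smooth_pd[OF f, of v], of "pt2 s r" u s] by (simp add: Pu)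
  have ftc: "f (pt2 s r) = f (pt2 s r0) + integral {r0..r} (\<lambda>\<rho>. pd v f (pt2 s \<rho>))" for s
  proof -
    have "((\<lambda>\<rho>. pd v f (pt2 s \<rho>)) has_integral (f (pt2 s r) - f (pt2 s r0))) {r0..r}"
      using r by (intro fundamental_theorem_of_calculus)
        (auto simp: has_real_derivative_iff_has_vector_derivative[symmetric]
          intro: has_field_derivative_at_within dv)
    then show ?thesis by (simp add: integral_unique)
  qed
  have "((\<lambda>s'. integral (cbox r0 r) (\<lambda>\<rho>. pd v f (pt2 s' \<rho>))) has_field_derivative
      integral (cbox r0 r) (\<lambda>\<rho>. pd u (pd v f) (pt2 s \<rho>))) (at s within UNIV)" for s
  proof (rule leibniz_rule_field_derivative)
    show "(\<lambda>\<rho>. pd v f (pt2 x \<rho>)) integrable_on cbox r0 r" for x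
      unfolding pt2_def
      by (simp add: integrable_continuous_real continuous_on_upd smooth_continuous_on smooth_pd f)
    show "continuous_on (UNIV \<times> cbox r0 r) (\<lambda>(x, t). pd u (pd v f) (pt2 x t))"
      using continuous_on_subset[OF continuous_on_upd2[OF
          smooth_continuous_on[OF smooth_pd[OF smooth_pd[OF f]]]]]
      by (simp add: pt2_def case_prod_beta')
  qed (use duv in auto)
  then have "((\<lambda>s'. f (pt2 s' r0) + integral {r0..r} (\<lambda>\<rho>. pd v f (pt2 s' \<rho>))) has_real_derivative
      pd u f (pt2 s r0) + integral {r0..r} (\<lambda>\<rho>. pd u (pd v f) (pt2 s \<rho>))) (at s)" for s
    by (intro DERIV_add du) simp
  then have "((\<lambda>s'. f (pt2 s' r)) has_real_derivative
      pd u f (pt2 s r0) + integral {r0..r} (\<lambda>\<rho>. pd u (pd v f) (pt2 s \<rho>))) (at s)" for s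
    by (simp add: ftc[symmetric])
  from DERIV_unique[OF du this, of "a u"] show ?thesis
    unfolding pt2_def fun_upd_triv .
qed

lemma pd_commute:
  assumes f: "smooth f"
  shows "pd v (pd u f) = pd u (pd v f)"
proof (cases "u = v")
  case False
  show ?thesis
  proof
    fix a :: pt
    define r0 where "r0 = a v - 1"
    define g where "g = (\<lambda>\<rho>. pd u (pd v f) (a(v := \<rho>)))"
    have eq: "pd u f (a(v := r)) = pd u f (a(v := r0)) + integral {r0..r} g" if "r0 \<le> r" for r
      unfolding g_def by (rule pd_eq_integral_pd_pd[OF f False that])
    have "((\<lambda>r. integral {r0..r} g) has_real_derivative g (a v)) (at (a v) within {r0..a v + 1})"
      unfolding g_def
      by (rule integral_has_real_derivative)
        (auto simp: r0_def intro: continuous_on_upd[OF smooth_continuous_on[OF smooth_pd[OF smooth_pd[OF f]]]])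
    then have "((\<lambda>r. pd u f (a(v := r0)) + integral {r0..r} g) has_real_derivative g (a v)) (at (a v))"
      using at_within_Icc_at[of r0 "a v" "a v + 1"]
      by (intro DERIV_add[where D=0, simplified] DERIV_const) (simp add: r0_def)
    then have "((\<lambda>r. pd u f (a(v := r))) has_real_derivative g (a v)) (at (a v))"
    proof (rule has_field_derivative_transform_within_open[where S="{r0<..}"])
      show "pd u f (a(v := r0)) + integral {r0..r} g = pd u f (a(v := r))" if "r \<in> {r0<..}" for r
        using eq[of r] that by simp
    qed (auto simp: r0_def)
    from DERIV_unique[OF smooth_has_pd[OF smooth_pd[OF f, of u], of a v] this]
    show "pd v (pd u f) a = pd u (pd v f) a"
      by (simp add: g_def)
  qed
qed simp

lemma depends_only_T_eq:
  assumes "depends_only f {T}"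
  shows "f a = f ((\<lambda>_. 0)(T := a T))"
  using assms unfolding depends_only_def by (metis fun_upd_same singletonD)

lemma depends_only_T_const:
  assumes f: "smooth f" "depends_only f {T}" and pdT: "pd T f = (\<lambda>_. 0)"
  shows "f = (\<lambda>_. f (\<lambda>_. 0))"
proof
  fix a
  have "((\<lambda>s. f ((\<lambda>_. 0)(T := s))) has_real_derivative 0) (at x)" for x
    using smooth_has_pd_at[OF f(1), of "\<lambda>_. 0" T x] pdT by simp
  then have "f ((\<lambda>_. 0)(T := a T)) = f ((\<lambda>_. 0)(T := 0))"
    using DERIV_isconst_all by blast
  then show "f a = f (\<lambda>_. 0)"
    using depends_only_T_eq[OF f(2), of a] by (simp add: fun_upd_idem)
qed

lemma depends_only_T_antiderivative:
  assumes g: "smooth g" "depends_only g {T}"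
  obtains h where "smooth h" "depends_only h {T}" "pd T h = g"
proof -
  define g0 where "g0 s = g ((\<lambda>_. 0)(T := s))" for s
  have "isCont g0 x" for x
    using continuous_on_upd[OF smooth_continuous_on[OF g(1)], of UNIV "\<lambda>_. 0" T]
    by (simp add: g0_def[abs_def] continuous_on_eq_continuous_at)
  then obtain F where F: "\<And>x. (F has_real_derivative g0 x) (at x)"
    using einterval_antiderivative[of "-\<infinity>" "\<infinity>" g0]
    by (auto simp: has_real_derivative_iff_has_vector_derivative)
  define h where "h a = F (a T)" for a
  have g_eq: "g a = g0 (a T)" for a
    unfolding g0_def by (rule depends_only_T_eq[OF g(2)])
  have hT: "depends_only h {T}" by (simp add: h_def depends_only_def)
  have pdT: "pd T h = g"
    by (rule pd_eqI) (simp add: h_def g_eq F)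
  have pdv: "pd v h = (\<lambda>_. 0)" if "v \<noteq> T" for v
    by (rule pd_eqI) (use that in \<open>simp add: h_def\<close>)
  have "continuous_on UNIV F"
    using F by (intro continuous_at_imp_continuous_on) (auto intro: DERIV_continuous)
  from continuous_on_compose2[OF this continuous_on_product_coordinates[of T]]
  have "continuous_on UNIV h"
    by (simp add: h_def[abs_def])
  moreover have "partially_differentiable h"
    by (rule partially_differentiableI[where g="\<lambda>v a. if v = T then g0 (a T) else 0"])
      (use F in \<open>auto simp: h_def[abs_def]\<close>)
  moreover have "smooth (pd v h)" for v
    by (cases "v = T") (simp_all add: pdT pdv g smooth_const)
  ultimately have "smooth h" using smooth_iff by blast
  then show ?thesis using hT pdT by (rule that)
qed


section \<open>The algebra \<open>\<A>(CPE)\<close>\<close>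

lemma depends_only_mono: "depends_only f S \<Longrightarrow> S \<subseteq> S' \<Longrightarrow> depends_only f S'"
  unfolding depends_only_def by blast

lemma dep_subset:
  assumes "depends_only f S"
  shows "dep f \<subseteq> S"
proof
  fix x assume "x \<in> dep f"
  then obtain a s where ne: "f (a(x := s)) \<noteq> f a" unfolding dep_def by auto
  show "x \<in> S"
  proof (rule ccontr)
    assume "x \<notin> S"
    then have "\<forall>v\<in>S. (a(x := s)) v = a v" by auto
    then show False using assms ne unfolding depends_only_def by blast
  qed
qed

lemma depends_only_combine:
  assumes "depends_only f S" "depends_only g S'"
  shows "depends_only (\<lambda>a. h (f a) (g a)) (S \<union> S')"
  using assms unfolding depends_only_def by (metis UnCI)

lemma pd_not_dep: "v \<notin> dep f \<Longrightarrow> pd v f = (\<lambda>_. 0)"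
  by (rule pd_eqI) (simp add: dep_def)

lemma depends_only_pd:
  assumes "depends_only f S"
  shows "depends_only (pd v f) S"
proof (cases "v \<in> S")
  case True
  show ?thesis unfolding depends_only_def
  proof (intro allI impI)
    fix a b :: pt assume "\<forall>w\<in>S. a w = b w"
    with True assms have "(\<lambda>s. f (a(v := s))) = (\<lambda>s. f (b(v := s)))" "a v = b v"
      unfolding depends_only_def by auto
    then show "pd v f a = pd v f b" unfolding pd_def by simp
  qed
next
  case False
  then have "v \<notin> dep f" using dep_subset[OF assms] by auto
  then show ?thesis by (simp add: pd_not_dep depends_only_def)
qed

lemma AlgE:
  assumes "f \<in> Alg m"
  obtains S where "finite S" "S \<subseteq> vars m" "depends_only f S" "smooth f"
  using assms unfolding Alg_def by blast

lemma AlgI: "finite S \<Longrightarrow> S \<subseteq> vars m \<Longrightarrow> depends_only f S \<Longrightarrow> smooth f \<Longrightarrow> f \<in> Alg m"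
  unfolding Alg_def by blast

lemma Alg_smooth: "f \<in> Alg m \<Longrightarrow> smooth f"
  by (auto elim: AlgE)

lemma Alg_const: "(\<lambda>_. c) \<in> Alg m"
  by (rule AlgI[of "{}"]) (auto simp: depends_only_def smooth_const)

lemma Alg_coord: "v \<in> vars m \<Longrightarrow> (\<lambda>a. a v) \<in> Alg m"
  by (rule AlgI[of "{v}"]) (auto simp: depends_only_def smooth_coord)

lemma Alg_combine:
  assumes "f \<in> Alg m" "g \<in> Alg m" "smooth (\<lambda>a. h (f a) (g a))"
  shows "(\<lambda>a. h (f a) (g a)) \<in> Alg m"
proof -
  obtain S where S: "finite S" "S \<subseteq> vars m" "depends_only f S" using assms(1) by (rule AlgE)
  obtain S' where S': "finite S'" "S' \<subseteq> vars m" "depends_only g S'" using assms(2) by (rule AlgE)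
  show ?thesis
    by (rule AlgI[of "S \<union> S'"]) (use S S' assms(3) depends_only_combine[OF S(3) S'(3)] in auto)
qed

lemma Alg_add: "f \<in> Alg m \<Longrightarrow> g \<in> Alg m \<Longrightarrow> (\<lambda>a. f a + g a) \<in> Alg m"
  by (rule Alg_combine) (auto intro: smooth_add Alg_smooth)

lemma Alg_mult: "f \<in> Alg m \<Longrightarrow> g \<in> Alg m \<Longrightarrow> (\<lambda>a. f a * g a) \<in> Alg m"
  by (rule Alg_combine) (auto intro: smooth_mult Alg_smooth)

lemma Alg_cmult: "f \<in> Alg m \<Longrightarrow> (\<lambda>a. c * f a) \<in> Alg m"
  using Alg_mult[OF Alg_const] .

lemma Alg_uminus: "f \<in> Alg m \<Longrightarrow> (\<lambda>a. - f a) \<in> Alg m"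
  using Alg_cmult[of f m "-1"] by simp

lemma Alg_sum: "finite I \<Longrightarrow> (\<And>i. i \<in> I \<Longrightarrow> f i \<in> Alg m) \<Longrightarrow> (\<lambda>a. \<Sum>i\<in>I. f i a) \<in> Alg m"
  by (induction I rule: finite_induct) (auto intro: Alg_const Alg_add)

lemma Alg_pd: "f \<in> Alg m \<Longrightarrow> pd v f \<in> Alg m"
  by (erule AlgE, rule AlgI) (auto intro: depends_only_pd smooth_pd)

lemma Dgen_eq:
  assumes "finite S" "depends_only f S"
  shows "Dgen c f = (\<lambda>a. \<Sum>v\<in>S. c v a * pd v f a)"
proof
  fix a
  have "(\<Sum>v\<in>dep f. c v a * pd v f a) = (\<Sum>v\<in>S. c v a * pd v f a)"
    by (rule sum.mono_neutral_left[OF assms(1) dep_subset[OF assms(2)]]) (auto simp: pd_not_dep)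
  then show "Dgen c f a = (\<Sum>v\<in>S. c v a * pd v f a)" by (simp add: Dgen_def)
qed

lemma Dgen_add:
  assumes "f \<in> Alg m" "g \<in> Alg m"
  shows "Dgen c (\<lambda>a. f a + g a) = (\<lambda>a. Dgen c f a + Dgen c g a)"
proof -
  obtain S where S: "finite S" "depends_only f S" "smooth f" using assms(1) by (rule AlgE)
  obtain S' where S': "finite S'" "depends_only g S'" "smooth g" using assms(2) by (rule AlgE)
  have "depends_only f (S \<union> S')" "depends_only g (S \<union> S')"
    using S S' by (auto intro: depends_only_mono)
  with S S' show ?thesis
    by (simp add: Dgen_eq[of "S \<union> S'"] depends_only_combine pd_add sum.distrib algebra_simps)
qed

lemma Dgen_cmult:
  assumes "f \<in> Alg m"
  shows "Dgen c (\<lambda>a. k * f a) = (\<lambda>a. k * Dgen c f a)"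
proof -
  obtain S where S: "finite S" "depends_only f S" "smooth f" using assms by (rule AlgE)
  have "depends_only (\<lambda>a. k * f a) S"
    using S by (auto simp: depends_only_def)
  with S show ?thesis
    by (simp add: Dgen_eq[of S] pd_cmult sum_distrib_left algebra_simps)
qed

lemma Dgen_zero: "Dgen c (\<lambda>_. 0) = (\<lambda>_. 0)"
  by (simp add: Dgen_eq[of "{}"] depends_only_def)

lemma Dgen_depends_only_T:
  assumes "depends_only f {T}" "c T = (\<lambda>_. 0)"
  shows "Dgen c f = (\<lambda>_. 0)"
  using assms by (simp add: Dgen_eq[of "{T}"])

lemma Dgen_sum:
  assumes "finite I" "\<And>i. i \<in> I \<Longrightarrow> f i \<in> Alg m"
  shows "Dgen c (\<lambda>a. \<Sum>i\<in>I. k i * f i a) = (\<lambda>a. \<Sum>i\<in>I. k i * Dgen c (f i) a)"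
  using assms
proof (induction I rule: finite_induct)
  case (insert i I)
  have "(\<lambda>a. k i * f i a) \<in> Alg m" "(\<lambda>a. \<Sum>i\<in>I. k i * f i a) \<in> Alg m"
    using insert by (auto intro!: Alg_sum Alg_cmult)
  moreover have "Dgen c (\<lambda>a. k i * f i a) = (\<lambda>a. k i * Dgen c (f i) a)"
    using insert by (intro Dgen_cmult) auto
  ultimately show ?case using insert by (simp add: Dgen_add)
qed (simp add: Dgen_zero)

lemma Dgen_Alg:
  assumes "f \<in> Alg m" "\<And>v. v \<in> vars m \<Longrightarrow> c v \<in> Alg m"
  shows "Dgen c f \<in> Alg m"
proof -
  obtain S where S: "finite S" "S \<subseteq> vars m" "depends_only f S" using assms(1) by (rule AlgE)
  have "(\<lambda>a. \<Sum>v\<in>S. c v a * pd v f a) \<in> Alg m"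
    using S assms by (intro Alg_sum Alg_mult Alg_pd) auto
  then show ?thesis using Dgen_eq[OF S(1) S(3)] by simp
qed

definition t_indep :: "fn \<Rightarrow> bool" where
  "t_indep f \<longleftrightarrow> (\<forall>a s. f (a(T := s)) = f a)"

lemma t_indep_pd:
  assumes "t_indep f"
  shows "t_indep (pd v f)"
proof (cases "v = T")
  case True
  have "T \<notin> dep f" using assms unfolding t_indep_def dep_def by auto
  with True show ?thesis by (simp add: pd_not_dep t_indep_def)
next
  case False
  have "f (a(T := s, v := r)) = f (a(v := r))" for a s r
    using assms False unfolding t_indep_def by (metis fun_upd_twist)
  with False show ?thesis by (simp add: t_indep_def pd_def)
qed

lemma t_indep_Dgen:
  assumes "t_indep f" "\<And>v. t_indep (c v)"
  shows "t_indep (Dgen c f)"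
  using assms t_indep_pd unfolding t_indep_def Dgen_def by simp

text \<open>Schwarz's theorem lets \<open>\<partial>\<^sub>t\<close> pass every \<open>\<partial>\<^sub>v\<close>; \<open>t\<close>-independence of the coefficients
  lets it pass the coefficients.\<close>

lemma pd_T_Dgen:
  assumes f: "f \<in> Alg m" and c: "\<And>v. v \<in> vars m \<Longrightarrow> t_indep (c v)"
  shows "pd T (Dgen c f) = Dgen c (pd T f)"
proof -
  obtain S where S: "finite S" "S \<subseteq> vars m" "depends_only f S" "smooth f" using f by (rule AlgE)
  have "pd T (\<lambda>a. \<Sum>v\<in>S. c v a * pd v f a) = (\<lambda>a. \<Sum>v\<in>S. c v a * pd T (pd v f) a)"
  proof (rule pd_eqI)
    fix a
    have "c v (a(T := s)) = c v a" if "v \<in> S" for v s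
      using c S(2) that unfolding t_indep_def by blast
    then have "(\<lambda>s. \<Sum>v\<in>S. c v (a(T := s)) * pd v f (a(T := s)))
        = (\<lambda>s. \<Sum>v\<in>S. c v a * pd v f (a(T := s)))"
      by simp
    moreover have "((\<lambda>s. \<Sum>v\<in>S. c v a * pd v f (a(T := s))) has_real_derivative
        (\<Sum>v\<in>S. c v a * pd T (pd v f) a)) (at (a T))"
      using S by (intro DERIV_sum DERIV_cmult smooth_has_pd smooth_pd)
    ultimately show "((\<lambda>s. \<Sum>v\<in>S. c v (a(T := s)) * pd v f (a(T := s))) has_real_derivative
        (\<Sum>v\<in>S. c v a * pd T (pd v f) a)) (at (a T))"
      by simp
  qed
  also have "\<dots> = (\<lambda>a. \<Sum>v\<in>S. c v a * pd v (pd T f) a)"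
    using pd_commute[OF S(4)] by simp
  finally show ?thesis
    using Dgen_eq[OF S(1) S(3)] Dgen_eq[OF S(1) depends_only_pd[OF S(3)]] by simp
qed

section \<open>The total derivatives \<open>D\<^sub>\<mu>\<close> and \<open>D\<^sub>t\<close>\<close>

lemma vars_simps:
  "T \<in> vars m"
  "X \<mu> \<in> vars m \<longleftrightarrow> \<mu> \<in> {1..m}"
  "U \<beta> i \<in> vars m \<longleftrightarrow> (\<beta> = 1 \<and> i \<in> MI m \<and> i 1 = 0) \<or> (\<beta> \<in> {2..m} \<and> i \<in> MI m)"
  "P i \<in> vars m \<longleftrightarrow> i \<in> MI m \<and> i 1 \<le> 1"
  by (auto simp: vars_def)

lemma inc_MI: "i \<in> MI m \<Longrightarrow> \<mu> \<in> {1..m} \<Longrightarrow> inc i \<mu> \<in> MI m"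
  by (auto simp: MI_def inc_def)

lemma inc_apply: "inc i \<mu> j = (if j = \<mu> then Suc (i \<mu>) else i j)"
  by (simp add: inc_def)

lemma unit_mi_MI: "\<mu> \<in> {1..m} \<Longrightarrow> unit_mi \<mu> \<in> MI m"
  by (auto simp: MI_def unit_mi_def inc_def)

lemma unit_mi_apply: "unit_mi \<mu> j = (if j = \<mu> then 1 else 0)"
  by (simp add: unit_mi_def inc_def)

definition coefD :: "nat \<Rightarrow> nat \<Rightarrow> var \<Rightarrow> fn" where
  "coefD m \<mu> = (if \<mu> = 1 then coef1 m else coefA \<mu>)"

lemma D_eq_Dgen: "D m \<mu> = Dgen (coefD m \<mu>)"
  by (simp add: D_def coefD_def)

lemma coefA_Alg:
  assumes "\<alpha> \<in> {2..m}" "v \<in> vars m"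
  shows "coefA \<alpha> v \<in> Alg m"
proof (cases v)
  case (U \<beta> i)
  then have "U \<beta> (inc i \<alpha>) \<in> vars m"
    using assms by (auto simp: vars_simps inc_apply intro!: inc_MI)
  then show ?thesis using U by (simp add: coefA_def Alg_coord)
next
  case (P i)
  then have "P (inc i \<alpha>) \<in> vars m"
    using assms by (auto simp: vars_simps inc_apply intro!: inc_MI)
  then show ?thesis using P by (simp add: coefA_def Alg_coord)
qed (simp_all add: coefA_def Alg_const)

lemma coefA_t_indep: "t_indep (coefA \<alpha> v)"
  by (cases v) (auto simp: coefA_def t_indep_def)

lemma foldr_funpow_closed:
  assumes "\<And>\<alpha> g. \<alpha> \<in> set xs \<Longrightarrow> Q g \<Longrightarrow> Q (F \<alpha> g)" "Q f"
  shows "Q (foldr (\<lambda>\<alpha> g. (F \<alpha> ^^ j \<alpha>) g) xs f)"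
  using assms
proof (induction xs)
  case (Cons x xs)
  have "Q ((F x ^^ n) g)" if "Q g" for n g
    using that by (induction n) (auto intro: Cons.prems(1))
  with Cons show ?case by simp
qed simp

lemma DN_Alg: "f \<in> Alg m \<Longrightarrow> DN m j f \<in> Alg m"
  unfolding DN_def Dalpha_def
  by (rule foldr_funpow_closed[where Q="\<lambda>g. g \<in> Alg m"]) (fastforce intro!: Dgen_Alg coefA_Alg)

lemma DN_t_indep: "t_indep f \<Longrightarrow> t_indep (DN m j f)"
  unfolding DN_def Dalpha_def
  by (rule foldr_funpow_closed[where Q=t_indep]) (auto intro: t_indep_Dgen coefA_t_indep)

lemma uval_Alg:
  assumes "l \<in> {1..m}" "\<mu> \<in> {1..m}"
  shows "uval m l \<mu> \<in> Alg m"
proof (cases "l = 1 \<and> \<mu> = 1")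
  case True
  have "(\<lambda>a. - (\<Sum>\<alpha>\<in>{2..m}. a (U \<alpha> (unit_mi \<alpha>)))) \<in> Alg m"
    by (intro Alg_uminus Alg_sum Alg_coord) (auto simp: vars_simps intro: unit_mi_MI)
  then show ?thesis using True by (simp add: uval_def)
next
  case False
  have "U l (unit_mi \<mu>) \<in> vars m"
    using assms False by (auto simp: vars_simps unit_mi_apply intro: unit_mi_MI)
  moreover have "uval m l \<mu> = (\<lambda>a. a (U l (unit_mi \<mu>)))" using False by (auto simp: uval_def)
  ultimately show ?thesis by (simp add: Alg_coord)
qed

lemma Phi_Alg: "Phi m \<in> Alg m"
  unfolding Phi_def
  by (intro Alg_add Alg_sum Alg_mult Alg_coord uval_Alg)
    (auto simp: vars_simps inc_apply unit_mi_apply intro!: inc_MI unit_mi_MI)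

lemma uval_upd_T: "uval m l \<mu> (a(T := s)) = uval m l \<mu> a"
  by (simp add: uval_def)

lemma Phi_t_indep: "t_indep (Phi m)"
  by (simp add: t_indep_def Phi_def uval_upd_T)

lemma coef1_Alg:
  assumes "v \<in> vars m" "1 \<le> m"
  shows "coef1 m v \<in> Alg m"
proof (cases v)
  case (U \<beta> i)
  show ?thesis
  proof (cases "\<beta> = 1")
    case True
    then have "i \<in> MI m" using assms U by (auto simp: vars_simps)
    then have "(\<lambda>a. - (\<Sum>\<gamma>\<in>{2..m}. a (U \<gamma> (inc i \<gamma>)))) \<in> Alg m"
      by (intro Alg_uminus Alg_sum Alg_coord) (auto simp: vars_simps intro!: inc_MI)
    then show ?thesis using U True by (simp add: coef1_def)
  next
    case False
    then have "U \<beta> (inc i 1) \<in> vars m" using assms U by (auto simp: vars_simps intro!: inc_MI)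
    then show ?thesis using U False by (simp add: coef1_def Alg_coord)
  qed
next
  case (P i)
  show ?thesis
  proof (cases "i 1 = 0")
    case True
    then have "P (inc i 1) \<in> vars m" using assms P by (auto simp: vars_simps inc_apply intro!: inc_MI)
    then show ?thesis using P True by (simp add: coef1_def Alg_coord)
  next
    case False
    then show ?thesis using P by (simp add: coef1_def Alg_uminus DN_Alg Phi_Alg)
  qed
qed (simp_all add: coef1_def Alg_const)

lemma coef1_t_indep: "t_indep (coef1 m v)"
proof (cases v)
  case (P i)
  have "t_indep (\<lambda>a. - DN m (i(1 := 0)) (Phi m) a)"
    using DN_t_indep[OF Phi_t_indep, of m "i(1 := 0)"] by (simp add: t_indep_def)
  then show ?thesis using P by (simp add: coef1_def t_indep_def)
qed (auto simp: coef1_def t_indep_def)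

lemma D_Alg: "\<mu> \<in> {1..m} \<Longrightarrow> f \<in> Alg m \<Longrightarrow> D m \<mu> f \<in> Alg m"
  unfolding D_eq_Dgen coefD_def by (rule Dgen_Alg) (auto intro: coef1_Alg coefA_Alg)

lemma D_depends_only_T: "depends_only f {T} \<Longrightarrow> D m \<mu> f = (\<lambda>_. 0)"
  unfolding D_eq_Dgen by (rule Dgen_depends_only_T) (simp_all add: coefD_def coef1_def coefA_def)

lemma pd_T_D: "\<mu> \<in> {1..m} \<Longrightarrow> f \<in> Alg m \<Longrightarrow> pd T (D m \<mu> f) = D m \<mu> (pd T f)"
  unfolding D_eq_Dgen coefD_def by (rule pd_T_Dgen) (auto intro: coef1_t_indep coefA_t_indep)

lemma D_zero: "D m \<mu> (\<lambda>_. 0) = (\<lambda>_. 0)"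
  by (simp add: D_eq_Dgen Dgen_zero)

lemma D_add: "f \<in> Alg m \<Longrightarrow> g \<in> Alg m \<Longrightarrow> D m' \<mu> (\<lambda>a. f a + g a) = (\<lambda>a. D m' \<mu> f a + D m' \<mu> g a)"
  unfolding D_eq_Dgen by (rule Dgen_add)

lemma D_cmult: "f \<in> Alg m \<Longrightarrow> D m' \<mu> (\<lambda>a. k * f a) = (\<lambda>a. k * D m' \<mu> f a)"
  unfolding D_eq_Dgen by (rule Dgen_cmult)

lemma Dmulti_Alg: "f \<in> Alg m \<Longrightarrow> Dmulti m i f \<in> Alg m"
  unfolding Dmulti_def by (rule foldr_funpow_closed[where Q="\<lambda>g. g \<in> Alg m"]) (auto intro: D_Alg)

lemma ev_Alg:
  assumes "\<forall>\<mu>\<in>{1..m}. E \<mu> \<in> Alg m" "Ep \<in> Alg m" "f \<in> Alg m" "1 \<le> m"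
  shows "ev m E Ep f \<in> Alg m"
proof -
  have "evcoef m E Ep v \<in> Alg m" if "v \<in> vars m" for v
    using assms that by (cases v) (auto simp: evcoef_def vars_simps intro: Dmulti_Alg Alg_const)
  then show ?thesis
    unfolding ev_def by (intro Dgen_Alg assms)
qed

lemma Dt_Alg:
  assumes "\<forall>\<mu>\<in>{1..m}. E \<mu> \<in> Alg m" "Ep \<in> Alg m" "f \<in> Alg m" "1 \<le> m"
  shows "Dt m E Ep f \<in> Alg m"
  unfolding Dt_def by (intro Alg_add Alg_pd ev_Alg assms)

lemma Dt_depends_only_T: "depends_only f {T} \<Longrightarrow> Dt m E Ep f = pd T f"
  unfolding Dt_def ev_def by (subst Dgen_depends_only_T) (simp_all add: evcoef_def)

lemma Dt_zero: "Dt m E Ep (\<lambda>_. 0) = (\<lambda>_. 0)"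
  by (simp add: Dt_def ev_def Dgen_zero pd_const)

lemma Dt_add:
  assumes "f \<in> Alg m" "g \<in> Alg m"
  shows "Dt m E Ep (\<lambda>a. f a + g a) = (\<lambda>a. Dt m E Ep f a + Dt m E Ep g a)"
  using assms by (simp add: Dt_def ev_def Dgen_add pd_add Alg_smooth algebra_simps)

lemma Dt_sum:
  assumes "finite I" "\<And>i. i \<in> I \<Longrightarrow> f i \<in> Alg m"
  shows "Dt m E Ep (\<lambda>a. \<Sum>i\<in>I. k i * f i a) = (\<lambda>a. \<Sum>i\<in>I. k i * Dt m E Ep (f i) a)"
proof -
  have "pd T (\<lambda>a. \<Sum>i\<in>I. k i * f i a) = (\<lambda>a. \<Sum>i\<in>I. k i * pd T (f i) a)"
    using assms by (intro pd_sum) (auto intro: Alg_smooth)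
  moreover have "ev m E Ep (\<lambda>a. \<Sum>i\<in>I. k i * f i a) = (\<lambda>a. \<Sum>i\<in>I. k i * ev m E Ep (f i) a)"
    unfolding ev_def by (rule Dgen_sum[OF assms])
  ultimately show ?thesis by (simp add: Dt_def sum.distrib algebra_simps)
qed

lemma Dt_D_commute:
  assumes E: "\<forall>\<mu>\<in>{1..m}. E \<mu> \<in> Alg m" and Ep: "Ep \<in> Alg m"
    and ev_comm: "\<forall>f\<in>Alg m. \<forall>\<mu>\<in>{1..m}. ev m E Ep (D m \<mu> f) = D m \<mu> (ev m E Ep f)"
    and f: "f \<in> Alg m" and \<mu>: "\<mu> \<in> {1..m}"
  shows "Dt m E Ep (D m \<mu> f) = D m \<mu> (Dt m E Ep f)"
  using pd_T_D[OF \<mu> f] ev_comm f \<mu> ev_Alg[OF E Ep f]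
  by (simp add: Dt_def D_add[OF Alg_pd[OF f]])


lemma Hform_Alg: "\<omega> \<in> Hform m q \<Longrightarrow> \<omega> J \<in> Alg m"
  by (simp add: Hform_def)

lemma Hform_outside: "\<omega> \<in> Hform m q \<Longrightarrow> \<not> (J \<subseteq> {1..m} \<and> int (card J) = q) \<Longrightarrow> \<omega> J = (\<lambda>_. 0)"
  by (simp add: Hform_def)

lemma zform_Hform: "zform \<in> Hform m q"
  by (simp add: Hform_def zform_def Alg_const)

lemma zero_form_eq: "(0::form) = zform"
  by (simp add: zform_def fun_eq_iff)

lemma Hform_degree_out_of_range:
  assumes "\<omega> \<in> Hform m q" "q < 0 \<or> q > int m"
  shows "\<omega> = zform"
proof (intro ext)
  fix J a
  have "\<not> (J \<subseteq> {1..m} \<and> int (card J) = q)"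
    using assms(2) card_mono[of "{1..m}" J] by auto
  then show "\<omega> J a = zform J a" using Hform_outside[OF assms(1)] by (simp add: zform_def)
qed

lemma Hform_0_nonempty: "\<omega> \<in> Hform m 0 \<Longrightarrow> J \<noteq> {} \<Longrightarrow> \<omega> J = (\<lambda>_. 0)"
  by (erule Hform_outside) (auto dest: finite_subset)

lemma Hform_lincomb:
  assumes "\<omega>1 \<in> Hform m q" "\<omega>2 \<in> Hform m q"
  shows "(\<lambda>J a. c1 * \<omega>1 J a + c2 * \<omega>2 J a) \<in> Hform m q"
  using assms unfolding Hform_def by (auto intro!: Alg_add Alg_cmult)

lemma Hform_diff: "\<omega>1 \<in> Hform m q \<Longrightarrow> \<omega>2 \<in> Hform m q \<Longrightarrow> (\<lambda>J a. \<omega>1 J a - \<omega>2 J a) \<in> Hform m q"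
  using Hform_lincomb[of \<omega>1 m q \<omega>2 1 "-1"] by simp

lemma Hform_uminus: "\<omega> \<in> Hform m q \<Longrightarrow> (\<lambda>J a. - \<omega> J a) \<in> Hform m q"
  using Hform_lincomb[OF zform_Hform, of \<omega> m q 0 "-1"] by simp

lemma Hform_sc: "\<omega> \<in> Hform m q \<Longrightarrow> sc_form c \<omega> \<in> Hform m q"
  using Hform_lincomb[OF zform_Hform, of \<omega> m q 0 c] by (simp add: sc_form_def)

lemma dH_lincomb:
  assumes "\<forall>J. \<omega>1 J \<in> Alg m" "\<forall>J. \<omega>2 J \<in> Alg m"
  shows "dH m (\<lambda>J a. c1 * \<omega>1 J a + c2 * \<omega>2 J a) = (\<lambda>J a. c1 * dH m \<omega>1 J a + c2 * dH m \<omega>2 J a)"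
proof (intro ext)
  fix J a
  have "D m \<mu> (\<lambda>a. c1 * \<omega>1 K a + c2 * \<omega>2 K a) = (\<lambda>a. c1 * D m \<mu> (\<omega>1 K) a + c2 * D m \<mu> (\<omega>2 K) a)"
    for \<mu> K
    using assms by (simp add: D_add[of _ m] D_cmult[of _ m] Alg_cmult)
  then show "dH m (\<lambda>J a. c1 * \<omega>1 J a + c2 * \<omega>2 J a) J a = c1 * dH m \<omega>1 J a + c2 * dH m \<omega>2 J a"
    by (simp add: dH_def sum.distrib sum_distrib_left algebra_simps)
qed

lemma dH_zform: "dH m zform = zform"
  by (simp add: dH_def zform_def D_zero[unfolded zform_def] fun_eq_iff)

lemma dH_diff:
  "\<forall>J. \<omega>1 J \<in> Alg m \<Longrightarrow> \<forall>J. \<omega>2 J \<in> Alg m \<Longrightarrow>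
    dH m (\<lambda>J a. \<omega>1 J a - \<omega>2 J a) = (\<lambda>J a. dH m \<omega>1 J a - dH m \<omega>2 J a)"
  using dH_lincomb[of \<omega>1 m \<omega>2 1 "-1"] by simp

lemma dH_uminus: "\<forall>J. \<omega> J \<in> Alg m \<Longrightarrow> dH m (\<lambda>J a. - \<omega> J a) = (\<lambda>J a. - dH m \<omega> J a)"
  using dH_lincomb[of zform m \<omega> 0 "-1"] by (simp add: zform_def Alg_const)

lemma dH_sc: "\<forall>J. \<omega> J \<in> Alg m \<Longrightarrow> dH m (sc_form c \<omega>) = sc_form c (dH m \<omega>)"
  using dH_lincomb[of zform m \<omega> 0 c] by (simp add: zform_def Alg_const sc_form_def)

lemma ZH_sc:
  assumes "\<omega> \<in> ZH m q"
  shows "sc_form c \<omega> \<in> ZH m q"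
proof -
  have \<omega>: "\<omega> \<in> Hform m q" "dH m \<omega> = zform" using assms by (auto simp: ZH_def)
  then have "dH m (sc_form c \<omega>) = sc_form c zform" by (simp add: dH_sc Hform_Alg)
  with \<omega> show ?thesis by (simp add: ZH_def Hform_sc) (simp add: sc_form_def zform_def)
qed

lemma dH_top_degree:
  assumes "\<theta> \<in> Hform m (int m)"
  shows "dH m \<theta> = zform"
proof (intro ext)
  fix J a
  show "dH m \<theta> J a = zform J a"
  proof (cases "J \<subseteq> {1..m}")
    case True
    have "\<theta> (J - {\<mu>}) = (\<lambda>_. 0)" if "\<mu> \<in> J" for \<mu>
    proof (rule Hform_outside[OF assms])
      have "card (J - {\<mu>}) < card J"
        using True that finite_subset by (blast intro: card_Diff1_less)
      then show "\<not> (J - {\<mu>} \<subseteq> {1..m} \<and> int (card (J - {\<mu>})) = int m)"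
        using True card_mono[of "{1..m}" J] by auto
    qed
    then show ?thesis using True by (simp add: dH_def zform_def D_zero)
  qed (simp add: dH_def zform_def)
qed

lemma dH_depends_only_T:
  assumes "depends_only h {T}"
  shows "dH m (\<lambda>J a. if J = {} then h a else 0) = zform"
proof -
  have "D m \<mu> (\<lambda>a. if K then h a else 0) = (\<lambda>_. 0)" for \<mu> K
    by (cases K) (simp_all add: D_zero D_depends_only_T[OF assms])
  then show ?thesis by (intro ext) (simp add: dH_def zform_def)
qed

lemma DtF_zform: "DtF m E Ep zform = zform"
  by (simp add: DtF_def zform_def Dt_zero)

lemma ZH_iff: "\<omega> \<in> ZH m q \<longleftrightarrow> \<omega> \<in> Hform m q \<and> dH m \<omega> = zform"
  by (simp add: ZH_def)

lemma BH_iff: "\<eta> \<in> BH m q \<longleftrightarrow> (\<exists>\<beta>\<in>Hform m (q - 1). \<eta> = dH m \<beta>)"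
  by (auto simp: BH_def)

lemma zform_BH: "zform \<in> BH m q"
  using zform_Hform dH_zform unfolding BH_iff by metis

lemma ZE_iff:
  "(\<theta>, \<omega>) \<in> ZE m E Ep q \<longleftrightarrow>
    \<theta> \<in> Hform m (q - 1) \<and> \<omega> \<in> Hform m q \<and> DtF m E Ep \<omega> = dH m \<theta> \<and> dH m \<omega> = zform"
  by (auto simp: ZE_def Eform_def dE_def fun_eq_iff zform_def)

lemma BE_iff:
  "x \<in> BE m E Ep q \<longleftrightarrow> (\<exists>\<beta> \<alpha>. \<beta> \<in> Hform m (q - 2) \<and> \<alpha> \<in> Hform m (q - 1) \<and>
    x = ((\<lambda>J a. DtF m E Ep \<alpha> J a - dH m \<beta> J a), dH m \<alpha>))"
proof -
  have "q - 1 - 1 = q - 2" by simp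
  then show ?thesis by (auto simp: BE_def Eform_def dE_def image_iff)
qed

lemma zform_pair_BE: "(zform, zform) \<in> BE m E Ep q"
  unfolding BE_iff
  by (rule exI[of _ zform], rule exI[of _ zform])
    (simp add: zform_Hform DtF_zform dH_zform, simp add: zform_def)

lemma snd_ZE_subset_KerDt: "snd ` ZE m E Ep q \<subseteq> KerDt m E Ep q"
proof
  fix \<omega> assume "\<omega> \<in> snd ` ZE m E Ep q"
  then obtain \<theta> where "(\<theta>, \<omega>) \<in> ZE m E Ep q" by force
  then show "\<omega> \<in> KerDt m E Ep q" by (auto simp: KerDt_def ZE_iff ZH_iff BH_iff)
qed

lemma KerDt_snd_ZE: "\<forall>\<omega>\<in>KerDt m E Ep q. \<exists>z\<in>ZE m E Ep q. \<omega> - snd z \<in> BH m q"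
proof
  fix \<omega> assume "\<omega> \<in> KerDt m E Ep q"
  then obtain \<theta> where "\<theta> \<in> Hform m (q - 1)" "DtF m E Ep \<omega> = dH m \<theta>" "\<omega> \<in> ZH m q"
    by (auto simp: KerDt_def BH_iff)
  then have "(\<theta>, \<omega>) \<in> ZE m E Ep q" by (simp add: ZE_iff ZH_iff)
  moreover have "\<omega> - snd (\<theta>, \<omega>) \<in> BH m q" by (simp add: zero_form_eq zform_BH)
  ultimately show "\<exists>z\<in>ZE m E Ep q. \<omega> - snd z \<in> BH m q" by blast
qed

lemma sq_iso_snd:
  assumes "\<forall>z\<in>ZE m E Ep q. snd z \<in> BH m q \<longleftrightarrow> z \<in> B"
  shows "sq_iso (ZE m E Ep q) B sc_pair (KerDt m E Ep q) (BH m q) sc_form"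
  unfolding sq_iso_def
  by (rule exI[of _ snd]) (use assms snd_ZE_subset_KerDt KerDt_snd_ZE in \<open>auto simp: sc_pair_def\<close>)

definition const_form :: "real \<Rightarrow> form" where
  "const_form c = (\<lambda>J a. if J = {} then c else 0)"

lemma const_form_ZE_0: "(zform, const_form c) \<in> ZE m E Ep 0"
proof -
  have "const_form c \<in> Hform m 0"
    by (auto simp: Hform_def const_form_def Alg_const fun_eq_iff)
  moreover have "DtF m E Ep (const_form c) = zform"
    unfolding DtF_def const_form_def zform_def
    by (intro ext) (simp add: Dt_depends_only_T depends_only_def pd_const)
  moreover have "dH m (const_form c) = zform"
    unfolding const_form_def by (rule dH_depends_only_T) (simp add: depends_only_def)
  ultimately show ?thesis
    by (simp add: ZE_iff zform_Hform dH_zform)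
qed

section \<open>Cohomology of the evolution complex\<close>

lemma ZE_top_degree_iff:
  "z \<in> ZE m E Ep (int m + 1) \<longleftrightarrow> fst z \<in> ZH m (int m) \<and> snd z = zform"
  using Hform_degree_out_of_range[of "snd z" m "int m + 1"] dH_top_degree[of "fst z" m]
  by (auto simp: ZE_iff[of "fst z" "snd z", simplified] ZH_iff zform_Hform DtF_zform dH_zform)

lemma BE_top_degree_iff:
  "(\<theta>, zform) \<in> BE m E Ep (int m + 1) \<longleftrightarrow>
    \<theta> \<in> {\<eta> + DtF m E Ep \<omega> | \<eta> \<omega>. \<eta> \<in> BH m (int m) \<and> \<omega> \<in> ZH m (int m)}"
proof
  assume "(\<theta>, zform) \<in> BE m E Ep (int m + 1)"
  then obtain \<beta> \<alpha> where \<beta>: "\<beta> \<in> Hform m (int m - 1)" and \<alpha>: "\<alpha> \<in> Hform m (int m)"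
    and \<theta>: "\<theta> = (\<lambda>J a. DtF m E Ep \<alpha> J a - dH m \<beta> J a)" by (auto simp: BE_iff)
  have "dH m (\<lambda>J a. - \<beta> J a) \<in> BH m (int m)"
    using Hform_uminus[OF \<beta>] by (auto simp: BH_iff)
  moreover have "\<alpha> \<in> ZH m (int m)" using \<alpha> dH_top_degree by (simp add: ZH_iff)
  moreover have "\<theta> = dH m (\<lambda>J a. - \<beta> J a) + DtF m E Ep \<alpha>"
    using \<theta> \<beta> by (simp add: dH_uminus Hform_Alg fun_eq_iff)
  ultimately show "\<theta> \<in> {\<eta> + DtF m E Ep \<omega> | \<eta> \<omega>. \<eta> \<in> BH m (int m) \<and> \<omega> \<in> ZH m (int m)}"
    by blast
next
  assume "\<theta> \<in> {\<eta> + DtF m E Ep \<omega> | \<eta> \<omega>. \<eta> \<in> BH m (int m) \<and> \<omega> \<in> ZH m (int m)}"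
  then obtain \<beta> \<alpha> where \<beta>: "\<beta> \<in> Hform m (int m - 1)" and \<alpha>: "\<alpha> \<in> ZH m (int m)"
    and \<theta>: "\<theta> = dH m \<beta> + DtF m E Ep \<alpha>" by (auto simp: BH_iff)
  have "(\<theta>, zform) = ((\<lambda>J a. DtF m E Ep \<alpha> J a - dH m (\<lambda>J a. - \<beta> J a) J a), dH m \<alpha>)"
    using \<theta> \<alpha> \<beta> by (simp add: dH_uminus Hform_Alg ZH_iff fun_eq_iff)
  moreover have "(\<lambda>J a. - \<beta> J a) \<in> Hform m (int m + 1 - 2)" "\<alpha> \<in> Hform m (int m + 1 - 1)"
    using Hform_uminus[OF \<beta>] \<alpha> by (simp_all add: ZH_iff)
  ultimately show "(\<theta>, zform) \<in> BE m E Ep (int m + 1)" unfolding BE_iff by blast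
qed

lemma HE_top_degree:
  "sq_iso (ZE m E Ep (int m + 1)) (BE m E Ep (int m + 1)) sc_pair
     (ZH m (int m)) {\<eta> + DtF m E Ep \<omega> | \<eta> \<omega>. \<eta> \<in> BH m (int m) \<and> \<omega> \<in> ZH m (int m)} sc_form"
  (is "sq_iso _ _ _ _ ?R _")
  unfolding sq_iso_def
proof (intro exI[of _ fst] conjI)
  show "fst ` ZE m E Ep (int m + 1) \<subseteq> ZH m (int m)" using ZE_top_degree_iff by blast
  show "\<forall>\<theta>\<in>ZH m (int m). \<exists>z\<in>ZE m E Ep (int m + 1). \<theta> - fst z \<in> ?R"
  proof
    fix \<theta> assume "\<theta> \<in> ZH m (int m)"
    then have "(\<theta>, zform) \<in> ZE m E Ep (int m + 1)" using ZE_top_degree_iff[of "(\<theta>, zform)"] by simp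
    moreover have "\<theta> - fst (\<theta>, zform) = zform + DtF m E Ep zform"
      unfolding DtF_zform by (simp add: zform_def fun_eq_iff)
    moreover have "zform \<in> ZH m (int m)" by (simp add: ZH_iff zform_Hform dH_zform)
    ultimately show "\<exists>z\<in>ZE m E Ep (int m + 1). \<theta> - fst z \<in> ?R" using zform_BH by blast
  qed
  show "\<forall>z\<in>ZE m E Ep (int m + 1). fst z \<in> ?R \<longleftrightarrow> z \<in> BE m E Ep (int m + 1)"
  proof
    fix z assume "z \<in> ZE m E Ep (int m + 1)"
    then have "snd z = zform" using ZE_top_degree_iff by blast
    then obtain \<theta> where "z = (\<theta>, zform)" by (cases z) simp
    then show "fst z \<in> ?R \<longleftrightarrow> z \<in> BE m E Ep (int m + 1)" using BE_top_degree_iff[of \<theta>] by simp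
  qed
qed (simp_all add: sc_pair_def)

locale evolution_cohomology =
  fixes m :: nat and E :: "nat \<Rightarrow> fn" and Ep :: fn
  assumes m2: "m \<ge> 2"
    and E_alg: "\<forall>\<mu>\<in>{1..m}. E \<mu> \<in> Alg m" and Ep_alg: "Ep \<in> Alg m"
    and ev_comm: "\<forall>f\<in>Alg m. \<forall>\<mu>\<in>{1..m}. ev m E Ep (D m \<mu> f) = D m \<mu> (ev m E Ep f)"
    and H_vanish: "\<forall>q. 1 \<le> q \<and> q \<le> int m - 2 \<longrightarrow> ZH m q \<subseteq> BH m q"
    and H0: "ZH m 0 = {\<omega> \<in> Hform m 0. depends_only (\<omega> {}) {T}}"
begin

lemma DtF_Hform: "\<omega> \<in> Hform m q \<Longrightarrow> DtF m E Ep \<omega> \<in> Hform m q"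
  using m2 unfolding Hform_def DtF_def by (auto intro: Dt_Alg[OF E_alg Ep_alg] simp: Dt_zero)

lemma DtF_dH:
  assumes "\<forall>J. \<omega> J \<in> Alg m"
  shows "DtF m E Ep (dH m \<omega>) = dH m (DtF m E Ep \<omega>)"
proof (intro ext)
  fix J a
  show "DtF m E Ep (dH m \<omega>) J a = dH m (DtF m E Ep \<omega>) J a"
  proof (cases "J \<subseteq> {1..m}")
    case True
    then have "finite J" using finite_subset by blast
    then have "Dt m E Ep (\<lambda>a. \<Sum>\<mu>\<in>J. (-1) ^ card {\<nu>\<in>J. \<nu> < \<mu>} * D m \<mu> (\<omega> (J - {\<mu>})) a)
        = (\<lambda>a. \<Sum>\<mu>\<in>J. (-1) ^ card {\<nu>\<in>J. \<nu> < \<mu>} * Dt m E Ep (D m \<mu> (\<omega> (J - {\<mu>}))) a)"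
      using True assms by (intro Dt_sum) (auto intro!: D_Alg)
    also have "\<dots> = (\<lambda>a. \<Sum>\<mu>\<in>J. (-1) ^ card {\<nu>\<in>J. \<nu> < \<mu>} * D m \<mu> (Dt m E Ep (\<omega> (J - {\<mu>}))) a)"
      using True assms by (intro ext sum.cong refl) (auto simp: Dt_D_commute[OF E_alg Ep_alg ev_comm])
    finally show ?thesis using True by (simp add: dH_def DtF_def)
  qed (simp add: dH_def DtF_def Dt_zero)
qed

text \<open>\<open>H\<^sup>0\<^sub>H\<close> consists of functions of \<open>t\<close>, on which \<open>D\<^sub>t = \<partial>\<^sub>t\<close> is onto.\<close>

lemma ZH_0_DtF_image:
  assumes "\<eta> \<in> ZH m 0"
  obtains \<gamma> where "\<gamma> \<in> ZH m 0" "DtF m E Ep \<gamma> = \<eta>"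
proof -
  have \<eta>H: "\<eta> \<in> Hform m 0" and \<eta>T: "depends_only (\<eta> {}) {T}" using assms H0 by auto
  obtain h where "smooth h" and hT: "depends_only h {T}" and dh: "pd T h = \<eta> {}"
    using depends_only_T_antiderivative[OF Alg_smooth[OF Hform_Alg[OF \<eta>H]] \<eta>T] .
  then have "h \<in> Alg m" by (intro AlgI[of "{T}"]) (auto simp: vars_simps)
  define \<gamma> :: form where "\<gamma> = (\<lambda>J a. if J = {} then h a else 0)"
  have "\<gamma> J \<in> Alg m" for J
    using \<open>h \<in> Alg m\<close> by (cases "J = {}") (simp_all add: \<gamma>_def Alg_const)
  then have "\<gamma> \<in> Hform m 0"
    by (auto simp: Hform_def \<gamma>_def fun_eq_iff)
  moreover have "dH m \<gamma> = zform"
    unfolding \<gamma>_def by (rule dH_depends_only_T[OF hT])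
  moreover have "DtF m E Ep \<gamma> = \<eta>"
  proof
    fix J
    show "DtF m E Ep \<gamma> J = \<eta> J"
      by (cases "J = {}")
        (simp_all add: DtF_def \<gamma>_def Dt_depends_only_T[OF hT] dh Hform_0_nonempty[OF \<eta>H] Dt_zero)
  qed
  ultimately show ?thesis using that by (simp add: ZH_iff)
qed

lemma ZH_decompose:
  assumes q: "1 \<le> q" "q \<le> int m - 1" and \<eta>: "\<eta> \<in> ZH m (q - 1)"
  obtains \<gamma> \<beta> where "\<gamma> \<in> ZH m (q - 1)" "\<beta> \<in> Hform m (q - 2)"
    "\<eta> = (\<lambda>J a. DtF m E Ep \<gamma> J a + dH m \<beta> J a)"
proof (cases "q = 1")
  case True
  with \<eta> obtain \<gamma> where \<gamma>: "\<gamma> \<in> ZH m (q - 1)" "DtF m E Ep \<gamma> = \<eta>"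
    using ZH_0_DtF_image by auto
  show ?thesis
  proof (rule that)
    show "\<eta> = (\<lambda>J a. DtF m E Ep \<gamma> J a + dH m zform J a)"
      using \<gamma>(2) by (simp add: dH_zform) (simp add: zform_def)
  qed (use \<gamma> zform_Hform in auto)
next
  case False
  with q have "1 \<le> q - 1 \<and> q - 1 \<le> int m - 2" by simp
  with \<eta> H_vanish have "\<eta> \<in> BH m (q - 1)" by blast
  then obtain \<beta> where \<beta>: "\<beta> \<in> Hform m (q - 2)" "\<eta> = dH m \<beta>"
    by (auto simp: BH_iff algebra_simps)
  show ?thesis
  proof (rule that)
    show "\<eta> = (\<lambda>J a. DtF m E Ep zform J a + dH m \<beta> J a)"
      using \<beta>(2) by (simp add: DtF_zform) (simp add: zform_def)
  qed (use \<beta> in \<open>auto simp: ZH_iff zform_Hform dH_zform\<close>)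
qed

lemma ZE_fst_minus_DtF_closed:
  assumes z: "z \<in> ZE m E Ep q" and \<alpha>: "\<alpha> \<in> Hform m (q - 1)" and \<omega>: "snd z = dH m \<alpha>"
  shows "(\<lambda>J a. fst z J a - DtF m E Ep \<alpha> J a) \<in> ZH m (q - 1)"
proof -
  from z have \<theta>: "fst z \<in> Hform m (q - 1)" and "DtF m E Ep (snd z) = dH m (fst z)"
    by (auto simp: ZE_iff[of "fst z" "snd z", simplified])
  moreover have "dH m (DtF m E Ep \<alpha>) = DtF m E Ep (snd z)"
    using DtF_dH[of \<alpha>] \<alpha> \<omega> by (simp add: Hform_Alg)
  ultimately have "dH m (\<lambda>J a. fst z J a - DtF m E Ep \<alpha> J a) = zform"
    using DtF_Hform[OF \<alpha>] by (simp add: dH_diff Hform_Alg zform_def)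
  with \<theta> show ?thesis
    by (simp add: ZH_iff Hform_diff DtF_Hform \<alpha>)
qed

lemma ZE_in_BE_if_snd_exact:
  assumes q: "1 \<le> q" "q \<le> int m - 1"
    and z: "z \<in> ZE m E Ep q" and \<alpha>: "\<alpha> \<in> Hform m (q - 1)" and \<omega>: "snd z = dH m \<alpha>"
  shows "z \<in> BE m E Ep q"
proof -
  obtain \<gamma> \<beta> where \<gamma>: "\<gamma> \<in> ZH m (q - 1)" and \<beta>: "\<beta> \<in> Hform m (q - 2)"
    and \<eta>: "(\<lambda>J a. fst z J a - DtF m E Ep \<alpha> J a) = (\<lambda>J a. DtF m E Ep \<gamma> J a + dH m \<beta> J a)"
    using ZH_decompose[OF q ZE_fst_minus_DtF_closed[OF z \<alpha> \<omega>]] .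
  define \<alpha>' where "\<alpha>' = (\<lambda>J a. 1 * \<alpha> J a + 1 * \<gamma> J a)"
  have \<gamma>H: "\<gamma> \<in> Hform m (q - 1)" and d\<gamma>: "dH m \<gamma> = zform" using \<gamma> by (auto simp: ZH_iff)
  have "\<alpha>' \<in> Hform m (q - 1)"
    unfolding \<alpha>'_def using \<alpha> \<gamma>H by (rule Hform_lincomb)
  moreover have "(\<lambda>J a. - \<beta> J a) \<in> Hform m (q - 2)" using \<beta> by (rule Hform_uminus)
  moreover have "dH m \<alpha>' = (\<lambda>J a. 1 * dH m \<alpha> J a + 1 * dH m \<gamma> J a)"
    unfolding \<alpha>'_def by (rule dH_lincomb) (use \<alpha> \<gamma>H in \<open>auto simp: Hform_Alg\<close>)
  then have "snd z = dH m \<alpha>'"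
    using \<omega> d\<gamma> by (simp add: zform_def)
  moreover have "DtF m E Ep \<alpha>' J = (\<lambda>a. DtF m E Ep \<alpha> J a + DtF m E Ep \<gamma> J a)" for J
    using \<alpha> \<gamma>H by (simp add: \<alpha>'_def DtF_def Dt_add Hform_Alg)
  then have "fst z = (\<lambda>J a. DtF m E Ep \<alpha>' J a - dH m (\<lambda>J a. - \<beta> J a) J a)"
    using \<eta> \<beta> by (simp add: dH_uminus Hform_Alg fun_eq_iff algebra_simps)
  ultimately have "\<exists>\<beta> \<alpha>. \<beta> \<in> Hform m (q - 2) \<and> \<alpha> \<in> Hform m (q - 1) \<and>
      (fst z, snd z) = ((\<lambda>J a. DtF m E Ep \<alpha> J a - dH m \<beta> J a), dH m \<alpha>)"
    by blast
  then show ?thesis unfolding BE_iff by simp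
qed

lemma HE_vanish:
  assumes "q < 0 \<or> (1 \<le> q \<and> q \<le> int m - 2) \<or> q > int m + 1"
  shows "ZE m E Ep q \<subseteq> BE m E Ep q"
proof
  fix z assume z: "z \<in> ZE m E Ep q"
  obtain \<theta> \<omega> where z\<theta>: "z = (\<theta>, \<omega>)" by (cases z)
  with z have \<theta>: "\<theta> \<in> Hform m (q - 1)" and \<omega>: "\<omega> \<in> ZH m q" by (auto simp: ZE_iff ZH_iff)
  show "z \<in> BE m E Ep q"
  proof (cases "1 \<le> q \<and> q \<le> int m - 2")
    case True
    with \<omega> H_vanish have "\<omega> \<in> BH m q" by blast
    then obtain \<alpha> where "\<alpha> \<in> Hform m (q - 1)" "\<omega> = dH m \<alpha>"
      by (auto simp: BH_iff)
    with True z z\<theta> show ?thesis using ZE_in_BE_if_snd_exact[of q z \<alpha>] by simp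
  next
    case False
    with assms have "\<theta> = zform" "\<omega> = zform"
      using Hform_degree_out_of_range[OF \<theta>] Hform_degree_out_of_range[of \<omega> m q] \<omega>
      by (auto simp: ZH_iff)
    then show ?thesis using z\<theta> zform_pair_BE by simp
  qed
qed

lemma ZE_0_eq_const_form:
  assumes "z \<in> ZE m E Ep 0"
  shows "z = (zform, const_form (snd z {} (\<lambda>_. 0)))"
proof -
  from assms have \<theta>: "fst z \<in> Hform m (0 - 1)" and \<omega>: "snd z \<in> ZH m 0"
    and Dt\<omega>: "DtF m E Ep (snd z) = dH m (fst z)"
    by (auto simp: ZE_iff[of "fst z" "snd z", simplified] ZH_iff)
  have \<theta>0: "fst z = zform" using Hform_degree_out_of_range[OF \<theta>] by simp
  have \<omega>H: "snd z \<in> Hform m 0" and \<omega>T: "depends_only (snd z {}) {T}" using \<omega> H0 by auto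
  have "pd T (snd z {}) = (\<lambda>_. 0)"
    using fun_cong[OF Dt\<omega>, of "{}"] Dt_depends_only_T[OF \<omega>T]
    by (simp add: \<theta>0 DtF_def dH_zform) (simp add: zform_def)
  then have "snd z {} = (\<lambda>_. snd z {} (\<lambda>_. 0))"
    by (rule depends_only_T_const[OF Alg_smooth[OF Hform_Alg[OF \<omega>H]] \<omega>T])
  then have "snd z = const_form (snd z {} (\<lambda>_. 0))"
    using Hform_0_nonempty[OF \<omega>H] by (auto simp: const_form_def fun_eq_iff)
  with \<theta>0 show ?thesis by (simp add: prod_eq_iff)
qed

lemma HE_0: "sq_iso (ZE m E Ep 0) (BE m E Ep 0) sc_pair (UNIV :: real set) {0} (*)"
  unfolding sq_iso_def
proof (rule exI[of _ "\<lambda>z. snd z {} (\<lambda>_. 0)"], intro conjI ballI allI)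
  show "\<exists>z\<in>ZE m E Ep 0. r - snd z {} (\<lambda>_. 0) \<in> {0}" for r
    using const_form_ZE_0[of r m E Ep] by (force simp: const_form_def)
  show "snd z {} (\<lambda>_. 0) \<in> {0} \<longleftrightarrow> z \<in> BE m E Ep 0" if "z \<in> ZE m E Ep 0" for z
  proof
    assume "snd z {} (\<lambda>_. 0) \<in> {0}"
    then have "z = (zform, zform)"
      using ZE_0_eq_const_form[OF that] by (simp add: const_form_def zform_def fun_eq_iff)
    then show "z \<in> BE m E Ep 0" using zform_pair_BE by simp
  next
    assume "z \<in> BE m E Ep 0"
    then obtain \<alpha> where "\<alpha> \<in> Hform m (0 - 1)" "snd z = dH m \<alpha>" by (auto simp: BE_iff)
    then show "snd z {} (\<lambda>_. 0) \<in> {0}"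
      using Hform_degree_out_of_range[of \<alpha> m "0 - 1"] by (simp add: dH_zform) (simp add: zform_def)
  qed
qed (auto simp: sc_pair_def sc_form_def)

lemma HE_m_minus_1:
  "sq_iso (ZE m E Ep (int m - 1)) (BE m E Ep (int m - 1)) sc_pair
     (KerDt m E Ep (int m - 1)) (BH m (int m - 1)) sc_form"
proof (rule sq_iso_snd, intro ballI iffI)
  fix z assume z: "z \<in> ZE m E Ep (int m - 1)" and "snd z \<in> BH m (int m - 1)"
  then obtain \<alpha> where "\<alpha> \<in> Hform m (int m - 1 - 1)" "snd z = dH m \<alpha>" by (auto simp: BH_iff)
  with z m2 show "z \<in> BE m E Ep (int m - 1)"
    using ZE_in_BE_if_snd_exact[of "int m - 1" z \<alpha>] by simp
next
  fix z assume "z \<in> BE m E Ep (int m - 1)"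
  then show "snd z \<in> BH m (int m - 1)" by (auto simp: BE_iff BH_iff)
qed

lemma HE_m:
  "sq_iso (ZE m E Ep (int m))
     {b + (sc_form ((-1) ^ (m - 1)) \<omega>, zform) | b \<omega>. b \<in> BE m E Ep (int m) \<and> \<omega> \<in> ZH m (int m - 1)}
     sc_pair (KerDt m E Ep (int m)) (BH m (int m)) sc_form"
proof (rule sq_iso_snd, intro ballI iffI)
  fix z assume z: "z \<in> ZE m E Ep (int m)" and "snd z \<in> BH m (int m)"
  then obtain \<alpha> where \<alpha>: "\<alpha> \<in> Hform m (int m - 1)" and \<omega>: "snd z = dH m \<alpha>" by (auto simp: BH_iff)
  define c :: real where "c = (-1) ^ (m - 1)"
  define \<eta> where "\<eta> = (\<lambda>J a. fst z J a - DtF m E Ep \<alpha> J a)"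
  have "\<eta> \<in> ZH m (int m - 1)"
    unfolding \<eta>_def using ZE_fst_minus_DtF_closed[OF z \<alpha> \<omega>] by simp
  then have "sc_form c \<eta> \<in> ZH m (int m - 1)" by (rule ZH_sc)
  moreover have "((\<lambda>J a. DtF m E Ep \<alpha> J a - dH m zform J a), dH m \<alpha>) \<in> BE m E Ep (int m)"
    unfolding BE_iff using \<alpha> zform_Hform by blast
  moreover have "c * c = 1"
    by (simp add: c_def power_mult_distrib[symmetric])
  then have "z = ((\<lambda>J a. DtF m E Ep \<alpha> J a - dH m zform J a), dH m \<alpha>) + (sc_form c (sc_form c \<eta>), zform)"
    using \<omega> by (simp add: prod_eq_iff fun_eq_iff sc_form_def dH_zform \<eta>_def mult.assoc[symmetric])
      (simp add: zform_def)
  ultimately show "z \<in> {b + (sc_form ((-1) ^ (m - 1)) \<omega>, zform) | b \<omega>.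
      b \<in> BE m E Ep (int m) \<and> \<omega> \<in> ZH m (int m - 1)}"
    unfolding c_def by blast
next
  fix z assume "z \<in> {b + (sc_form ((-1) ^ (m - 1)) \<omega>, zform) | b \<omega>.
      b \<in> BE m E Ep (int m) \<and> \<omega> \<in> ZH m (int m - 1)}"
  then obtain b w where "z = b + (sc_form ((-1) ^ (m - 1)) w, zform)" "b \<in> BE m E Ep (int m)"
    by blast
  then show "snd z \<in> BH m (int m)" by (auto simp: BE_iff BH_iff zero_form_eq[symmetric])
qed

end

theorem mainTheorem7:
  fixes m :: nat and E :: "nat \<Rightarrow> fn" and Ep :: fn
  assumes m2: "m \<ge> 2"
    and E_alg: "\<forall>\<mu>\<in>{1..m}. E \<mu> \<in> Alg m" and Ep_alg: "Ep \<in> Alg m"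
    and div_free: "(\<lambda>a. \<Sum>\<mu>\<in>{1..m}. D m \<mu> (E \<mu>) a) = (\<lambda>a. 0)"
    and pressure: "(\<lambda>a. Lap m Ep a
        + 2 * (\<Sum>l\<in>{1..m}. \<Sum>\<mu>\<in>{1..m}. uval m l \<mu> a * D m l (E \<mu>) a)) = (\<lambda>a. 0)"
    and ev_comm: "\<forall>f\<in>Alg m. \<forall>\<mu>\<in>{1..m}. ev m E Ep (D m \<mu> f) = D m \<mu> (ev m E Ep f)"
    and H_vanish: "\<forall>q. 1 \<le> q \<and> q \<le> int m - 2 \<longrightarrow> ZH m q \<subseteq> BH m q"
    and H0: "ZH m 0 = {\<omega> \<in> Hform m 0. depends_only (\<omega> {}) {T}}"
  shows "(\<forall>q. (q < 0 \<or> (1 \<le> q \<and> q \<le> int m - 2) \<or> q > int m + 1)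
            \<longrightarrow> ZE m E Ep q \<subseteq> BE m E Ep q)
    \<and> sq_iso (ZE m E Ep 0) (BE m E Ep 0) sc_pair (UNIV :: real set) {0} (*)
    \<and> sq_iso (ZE m E Ep (int m - 1)) (BE m E Ep (int m - 1)) sc_pair
             (KerDt m E Ep (int m - 1)) (BH m (int m - 1)) sc_form
    \<and> sq_iso (ZE m E Ep (int m))
             {b + (sc_form ((-1) ^ (m - 1)) \<omega>, zform) | b \<omega>.
                 b \<in> BE m E Ep (int m) \<and> \<omega> \<in> ZH m (int m - 1)} sc_pair
             (KerDt m E Ep (int m)) (BH m (int m)) sc_form
    \<and> sq_iso (ZE m E Ep (int m + 1)) (BE m E Ep (int m + 1)) sc_pair
             (ZH m (int m)) {\<eta> + DtF m E Ep \<omega> | \<eta> \<omega>. \<eta> \<in> BH m (int m) \<and> \<omega> \<in> ZH m (int m)} sc_form"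
proof -
  \<comment> \<open>\<open>div_free\<close> and \<open>pressure\<close> are what makes \<open>ev_comm\<close> hold in the paper.\<close>
  interpret evolution_cohomology m E Ep
    using m2 E_alg Ep_alg ev_comm H_vanish H0 by unfold_locales
  show ?thesis
    using HE_vanish HE_0 HE_m_minus_1 HE_m HE_top_degree by blast
qed

end
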